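(* Every superset-closed adversary $\mathcal A\subseteq 2^\Pi$ is fair, i.e. for all $P\subseteq\Pi$ and $Q\subseteq P$, $\mathit{setcon}(\mathcal A|_{P,Q})=\min(|Q|,\mathit{setcon}(\mathcal A|_P))$.
   Context: An adversary is a set $\mathcal A\subseteq 2^\Pi$ of subsets (live sets) of the process set $\Pi=\{p_1,\dots,p_n\}$. It is superset-closed if $S\in\mathcal A$, $S\subseteq S'\subseteq\Pi$ imply $S'\in\mathcal A$. $\mathcal A|_P=\{S\in\mathcal A: S\subseteq P\}$ and $\mathcal A|_{P,Q}=\{S\in\mathcal A|_P: S\cap Q\neq\emptyset\}$. The set consensus power is defined recursively by $\mathit{setcon}(\emptyset)=0$ and, for $\mathcal A\ne\emptyset$, $\mathit{setcon}(\mathcal A)=\max_{S\in\mathcal A}\min_{a\in S}\mathit{setcon}(\mathcal A|_{S\setminus\{a\}})+1$. $\mathcal A$ is fair if for all $P\subseteq\Pi$ and $Q\subseteq P$, $\mathit{setcon}(\mathcal A|_{P,Q})=\min(|Q|,\mathit{setcon}(\mathcal A|_P))$. (Known fact usable: for superset-closed $\mathcal A$, $\mathit{setcon}(\mathcal A)$ equals the minimum size of a hitting set of $\mathcal A$, i.e. a subset of $\Pi$ meeting every live set.) *)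

theory Defs
  imports Main
begin

text \<open>An adversary over process set Pi is a family of live sets (subsets of Pi).\<close>

definition restr :: "'a set set \<Rightarrow> 'a set \<Rightarrow> 'a set set" where
  "restr A P = {S \<in> A. S \<subseteq> P}"

definition restr2 :: "'a set set \<Rightarrow> 'a set \<Rightarrow> 'a set \<Rightarrow> 'a set set" where
  "restr2 A P Q = {S \<in> restr A P. S \<inter> Q \<noteq> {}}"

definition superset_closed :: "'a set \<Rightarrow> 'a set set \<Rightarrow> bool" where
  "superset_closed Pi A \<longleftrightarrow> (\<forall>S S'. S \<in> A \<and> S \<subseteq> S' \<and> S' \<subseteq> Pi \<longrightarrow> S' \<in> A)"

text \<open>Set consensus power. The guard on finiteness only ensures totality; adversaries
  over a finite process set are always finite.\<close>
function setcon :: "'a set set \<Rightarrow> nat" where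
  "setcon A = (if A = {} \<or> infinite (\<Union>A) then 0
     else Max ((\<lambda>S. Min ((\<lambda>a. setcon (restr A (S - {a}))) ` S) + 1) ` A))"
  by auto
termination
proof (relation "measure (\<lambda>A. card (\<Union>A))")
  show "wf (measure (\<lambda>A. card (\<Union>A)))" by simp
next
  fix A :: "'a set set" and S a
  assume h: "\<not> (A = {} \<or> infinite (\<Union>A))" "S \<in> A" "a \<in> S"
  have "\<Union>(restr A (S - {a})) \<subseteq> S - {a}" by (auto simp: restr_def)
  also have "\<dots> \<subset> \<Union>A" using h by blast
  finally have "\<Union>(restr A (S - {a})) \<subset> \<Union>A" .
  then show "(restr A (S - {a}), A) \<in> measure (\<lambda>A. card (\<Union>A))"
    using h by (simp add: psubset_card_mono)
qed

definition fair :: "'a set \<Rightarrow> 'a set set \<Rightarrow> bool" where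
  "fair Pi A \<longleftrightarrow> (\<forall>P Q. P \<subseteq> Pi \<and> Q \<subseteq> P \<longrightarrow>
      setcon (restr2 A P Q) = min (card Q) (setcon (restr A P)))"

end

theory Submission
  imports Defs
begin

declare setcon.simps [simp del]

text \<open>For a superset-closed adversary \<open>A\<close> over a finite set \<open>P\<close>, \<open>setcon A\<close> equals the
  hitting number of \<open>A\<close>, by induction on \<open>P\<close>. Every live set \<open>S\<close> contains a point \<open>a\<close> of a
  minimum hitting set \<open>H\<close>, and \<open>H - {a}\<close> hits \<open>A|\<^bsub>S-{a}\<^esub>\<close>; this bounds \<open>setcon\<close> from above.
  For the lower bound take the live set \<open>P\<close> itself: for each \<open>a \<in> P\<close>, a hitting set of
  \<open>A|\<^bsub>P-{a}\<^esub>\<close> together with \<open>a\<close> hits \<open>A\<close>.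

  Fairness thereby becomes a statement about hitting sets. Let \<open>B = A|\<^sub>P\<close> and
  \<open>C = A|\<^bsub>P,Q\<^esub>\<close>. Both \<open>Q\<close> and every hitting set of \<open>B\<close> hit \<open>C\<close>. Conversely, if a hitting
  set \<open>H\<close> of \<open>C\<close> is smaller than \<open>Q\<close> and than every hitting set of \<open>B\<close>, some live set of
  \<open>B\<close> avoids \<open>H\<close>, hence so does its superset \<open>P - H\<close>; but \<open>P - H\<close> meets \<open>Q\<close>, so it lies
  in \<open>C\<close>.\<close>

definition hitting_set :: "'a set set \<Rightarrow> 'a set \<Rightarrow> bool" where
  "hitting_set B H \<longleftrightarrow> (\<forall>S\<in>B. S \<inter> H \<noteq> {})"

definition hitting_number :: "'a set set \<Rightarrow> nat" where
  "hitting_number B = (LEAST k. \<exists>H. finite H \<and> card H = k \<and> hitting_set B H)"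

lemma hitting_number_le_card:
  assumes "finite H" and "hitting_set B H"
  shows "hitting_number B \<le> card H"
  unfolding hitting_number_def by (rule Least_le) (use assms in blast)

lemma obtain_min_hitting_set:
  assumes "finite (\<Union>B)" and "{} \<notin> B"
  obtains H where "finite H" "card H = hitting_number B" "hitting_set B H"
proof -
  have "S \<inter> \<Union>B \<noteq> {}" if "S \<in> B" for S
    using that assms(2) Int_absorb2[OF Union_upper[OF that]] by auto
  then have "hitting_set B (\<Union>B)"
    unfolding hitting_set_def by blast
  with assms(1) have "\<exists>k H. finite H \<and> card H = k \<and> hitting_set B H"
    by blast
  then have "\<exists>H. finite H \<and> card H = hitting_number B \<and> hitting_set B H"
    unfolding hitting_number_def by (rule LeastI_ex)
  with that show thesis
    by blast
qed

lemma hitting_number_mono: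
  assumes "C \<subseteq> B" and "finite (\<Union>B)" and "{} \<notin> B"
  shows "hitting_number C \<le> hitting_number B"
proof -
  obtain H where "finite H" "card H = hitting_number B" "hitting_set B H"
    using obtain_min_hitting_set assms(2,3) by blast
  with assms(1) show ?thesis
    using hitting_number_le_card[of H C] unfolding hitting_set_def by auto
qed

lemma hitting_number_restr_less:
  assumes "finite H" and "hitting_set B H" and "a \<in> H"
  shows "hitting_number (restr B (X - {a})) < card H"
proof -
  have "hitting_set (restr B (X - {a})) (H - {a})"
    using assms(2) unfolding hitting_set_def restr_def by blast
  then have "hitting_number (restr B (X - {a})) \<le> card (H - {a})"
    using assms(1) by (simp add: hitting_number_le_card)
  also have "\<dots> < card H"
    using assms(1,3) by (rule card_Diff1_less)
  finally show ?thesis .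
qed

lemma hitting_number_le_restr_Suc:
  assumes "finite P" and "B \<subseteq> Pow P" and "{} \<notin> B"
  shows "hitting_number B \<le> Suc (hitting_number (restr B (P - {a})))"
proof -
  have "\<Union>(restr B (P - {a})) \<subseteq> P"
    using assms(2) unfolding restr_def by blast
  then have "finite (\<Union>(restr B (P - {a})))"
    using assms(1) by (rule finite_subset)
  moreover have "{} \<notin> restr B (P - {a})"
    using assms(3) unfolding restr_def by blast
  ultimately obtain H where H: "finite H" "card H = hitting_number (restr B (P - {a}))"
      "hitting_set (restr B (P - {a})) H"
    using obtain_min_hitting_set by blast
  have "S \<inter> insert a H \<noteq> {}" if "S \<in> B" for S
  proof (cases "a \<in> S")
    case False
    with that assms(2) have "S \<in> restr B (P - {a})"
      unfolding restr_def by auto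
    with H(3) show ?thesis
      unfolding hitting_set_def by auto
  qed auto
  then have "hitting_set B (insert a H)"
    unfolding hitting_set_def by blast
  then have "hitting_number B \<le> card (insert a H)"
    using H(1) by (simp add: hitting_number_le_card)
  also have "\<dots> \<le> Suc (card H)"
    using H(1) by (simp add: card_insert_if)
  finally show ?thesis using H(2) by simp
qed

lemma superset_closedD:
  assumes "superset_closed P B" and "S \<in> B" and "S \<subseteq> S'" and "S' \<subseteq> P"
  shows "S' \<in> B"
  using assms unfolding superset_closed_def by blast

lemma superset_closed_restr:
  assumes "superset_closed Pi A" and "X \<subseteq> Pi"
  shows "superset_closed X (restr A X)"
  unfolding superset_closed_def
proof (intro allI impI)
  fix S S'
  assume "S \<in> restr A X \<and> S \<subseteq> S' \<and> S' \<subseteq> X"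
  then have "S \<in> A" "S \<subseteq> S'" "S' \<subseteq> Pi" "S' \<subseteq> X"
    using assms(2) unfolding restr_def by auto
  then show "S' \<in> restr A X"
    using superset_closedD[OF assms(1)] unfolding restr_def by blast
qed

lemma superset_closed_meeting:
  assumes "superset_closed P B"
  shows "superset_closed P {S \<in> B. S \<inter> Q \<noteq> {}}"
  using assms unfolding superset_closed_def by blast

lemma setcon_unfold:
  assumes "B \<noteq> {}" and "finite (\<Union>B)"
  shows "setcon B = Max ((\<lambda>S. Min ((\<lambda>a. setcon (restr B (S - {a}))) ` S) + 1) ` B)"
  using assms by (subst setcon.simps) simp

lemma hitting_number_recursion:
  assumes "finite P" and "B \<subseteq> Pow P" and "{} \<notin> B" and "superset_closed P B"
    and "B \<noteq> {}"
  shows "hitting_number B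
    = Max ((\<lambda>S. Min ((\<lambda>a. hitting_number (restr B (S - {a}))) ` S) + 1) ` B)"
    (is "_ = Max (?f ` B)")
proof -
  have finB: "finite B"
    using assms(1,2) by (simp add: finite_subset)
  have finS: "finite S" if "S \<in> B" for S
    using that assms(1,2) by (auto intro: finite_subset)
  have "finite (\<Union>B)"
    using assms(1,2) by (auto intro: finite_subset)
  then obtain H where H: "finite H" "card H = hitting_number B" "hitting_set B H"
    using obtain_min_hitting_set assms(3) by blast
  have "?f S \<le> hitting_number B" if "S \<in> B" for S
  proof -
    have "S \<inter> H \<noteq> {}"
      using H(3) that unfolding hitting_set_def by simp
    then obtain a where a: "a \<in> S" "a \<in> H"
      by blast
    have "Min ((\<lambda>a. hitting_number (restr B (S - {a}))) ` S)
        \<le> hitting_number (restr B (S - {a}))"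
      using finS[OF that] a(1) by simp
    also have "\<dots> < card H"
      using H(1,3) a(2) by (rule hitting_number_restr_less)
    finally show ?thesis
      using H(2) by simp
  qed
  then have upper: "Max (?f ` B) \<le> hitting_number B"
    using finB assms(5) by simp
  obtain S where "S \<in> B"
    using assms(5) by blast
  with assms(2,4) have P_live: "P \<in> B"
    by (blast intro: superset_closedD)
  then obtain a where "a \<in> P" and a_min: "Min ((\<lambda>a. hitting_number (restr B (P - {a}))) ` P)
      = hitting_number (restr B (P - {a}))"
    using Min_in[of "(\<lambda>a. hitting_number (restr B (P - {a}))) ` P"] assms(1,3) by fastforce
  have "hitting_number B \<le> ?f P"
    unfolding a_min using hitting_number_le_restr_Suc[OF assms(1-3)] by simp
  also have "\<dots> \<le> Max (?f ` B)"
    using finB P_live by simp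
  finally show ?thesis
    using upper by (rule antisym)
qed

lemma setcon_eq_hitting_number:
  assumes "finite P" and "B \<subseteq> Pow P" and "{} \<notin> B" and "superset_closed P B"
  shows "setcon B = hitting_number B"
  using assms
proof (induction P arbitrary: B rule: finite_psubset_induct)
  case (psubset P)
  show ?case
  proof (cases "B = {}")
    case True
    then show ?thesis
      using hitting_number_le_card[of "{}" B] by (simp add: hitting_set_def setcon.simps)
  next
    case False
    have "setcon (restr B (S - {a})) = hitting_number (restr B (S - {a}))"
      if "S \<in> B" and "a \<in> S" for S a
    proof (rule psubset.IH)
      show "S - {a} \<subset> P"
        using that psubset.prems(1) by blast
      then show "superset_closed (S - {a}) (restr B (S - {a}))"
        using psubset.prems(3) superset_closed_restr by blast
    qed (use psubset.prems(2) in \<open>auto simp: restr_def\<close>)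
    moreover have "finite (\<Union>B)"
      using psubset.hyps psubset.prems(1) by (auto intro: finite_subset)
    ultimately show ?thesis
      using hitting_number_recursion[OF psubset.hyps psubset.prems False]
      by (simp add: setcon_unfold[OF False] cong: image_cong)
  qed
qed

lemma hitting_number_meeting:
  assumes "finite P" and "B \<subseteq> Pow P" and "{} \<notin> B" and "superset_closed P B"
    and "Q \<subseteq> P"
  shows "hitting_number {S \<in> B. S \<inter> Q \<noteq> {}} = min (card Q) (hitting_number B)"
    (is "hitting_number ?C = _")
proof -
  have fin: "finite (\<Union>B)"
    using assms(1,2) by (auto intro: finite_subset)
  have "hitting_number ?C \<le> card Q"
    using assms(1,5) by (intro hitting_number_le_card) (auto intro: finite_subset simp: hitting_set_def)
  moreover have "hitting_number ?C \<le> hitting_number B"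
    using fin assms(3) by (intro hitting_number_mono) auto
  moreover have "min (card Q) (hitting_number B) \<le> hitting_number ?C"
  proof (rule ccontr)
    have "finite (\<Union>?C)"
      using fin by (rule finite_subset[rotated]) blast
    then obtain H where H: "finite H" "card H = hitting_number ?C" "hitting_set ?C H"
      using obtain_min_hitting_set[of ?C] assms(3) by blast
    assume "\<not> ?thesis"
    then have "card H < card Q" and "card H < hitting_number B"
      using H(2) by auto
    then obtain q where q: "q \<in> Q" "q \<notin> H"
      using card_mono[OF H(1)] by (meson leD subsetI)
    obtain S where "S \<in> B" "S \<inter> H = {}"
      using hitting_number_le_card[OF H(1), of B] \<open>card H < hitting_number B\<close>
      unfolding hitting_set_def by auto
    moreover from this assms(2) have "S \<subseteq> P - H"
      by blast
    ultimately have "P - H \<in> B"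
      using assms(4) by (blast intro: superset_closedD)
    then have "P - H \<in> ?C"
      using q assms(5) by blast
    then show False
      using H(3) unfolding hitting_set_def by blast
  qed
  ultimately show ?thesis by linarith
qed

theorem theorem5:
  fixes Pi :: "'a set" and A :: "'a set set"
  assumes "finite Pi"
    and "A \<subseteq> Pow Pi"
    and "{} \<notin> A"
    and "superset_closed Pi A"
  shows "fair Pi A"
  unfolding fair_def
proof (intro allI impI, elim conjE)
  fix P Q
  assume "P \<subseteq> Pi" and "Q \<subseteq> P"
  let ?B = "restr A P"
  let ?C = "{S \<in> ?B. S \<inter> Q \<noteq> {}}"
  have P: "finite P"
    using \<open>P \<subseteq> Pi\<close> assms(1) by (rule finite_subset)
  have B: "?B \<subseteq> Pow P" "{} \<notin> ?B" "superset_closed P ?B"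
    using assms(3,4) \<open>P \<subseteq> Pi\<close> superset_closed_restr unfolding restr_def by auto
  have C: "?C \<subseteq> Pow P" "{} \<notin> ?C" "superset_closed P ?C"
    using B superset_closed_meeting by auto
  have "setcon ?C = hitting_number ?C"
    using setcon_eq_hitting_number[OF P C] .
  also have "\<dots> = min (card Q) (hitting_number ?B)"
    using hitting_number_meeting[OF P B \<open>Q \<subseteq> P\<close>] .
  also have "\<dots> = min (card Q) (setcon ?B)"
    using setcon_eq_hitting_number[OF P B] by simp
  finally show "setcon (restr2 A P Q) = min (card Q) (setcon ?B)"
    unfolding restr2_def .
qed

end
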